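(* For every $c\in(0,1]$ and every $d$ with $1\le d<\frac{1}{1-c}$ (any $d\ge 1$ if $c=1$) and every $\delta>0$, there exists an instance of the submodular partition problem with two users, both of whose valuation functions have curvature exactly $c$, such that the run of GREEDY-M satisfies $\max_i\{c_{u_i}+1/d_i^p\}=c+\frac1d$ and $$\frac{Z(G)}{Z(\Omega)}\ \le\ \frac{1}{c+\frac1d}+\delta .$$ Thus the lower bound $\min\bigl(1,1/\max_i\{c_{u_i}+1/d_i^p\}\bigr)$ on $Z(G)/Z(\Omega)$ for GREEDY-M cannot be improved in general.
   Context: Submodular partition problem: resources $\mathcal{R}$ ($|\mathcal{R}|=n$), users $\mathcal{U}$, monotone submodular $Z_u:2^{\mathcal{R}}\to\mathbb{R}$ with $Z_u(\emptyset)=0$; $Z(S)=\sum_u Z_u(S_u)$ with $S_u=\{r:(u,r)\in S\}$; a partition assigns each resource to exactly one user; $\Omega$ is an optimal partition. $\rho^u_r(S)=Z_u(S_u\cup\{r\})-Z_u(S_u)$. Curvature $c_u=1-\min\{(Z_u(S\cup\{r\})-Z_u(S))/Z_u(\{r\}): S\subseteq\mathcal{R}, r\notin S, Z_u(\{r\})>0\}$. GREEDY-M: $G^0=\emptyset$; at iteration $i=1,\dots,n$ pick, among pairs $(u,r)$ with $r$ unallocated in $G^{i-1}$, one maximizing $\rho^u_r(G^{i-1})$; ties broken by minimizing $c_u+1/d_i(u,r)$ where $d_i(u,r)=\rho^u_r(G^{i-1})/\max_{u'\ne u}\rho^{u'}_r(G^{i-1})$, then by a fixed index; call it $(u_i,r_i)$,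 $G^i=G^{i-1}\cup\{(u_i,r_i)\}$, $G=G^n$; $d_i^p=d_i(u_i,r_i)$. *)

theory Defs
  imports Main "HOL.Real"
begin

definition alloc_of :: "(nat \<times> nat) set \<Rightarrow> nat \<Rightarrow> nat set" where
  "alloc_of S u = {r. (u, r) \<in> S}"

definition total_val :: "nat set \<Rightarrow> (nat \<Rightarrow> nat set \<Rightarrow> real) \<Rightarrow> (nat \<times> nat) set \<Rightarrow> real" where
  "total_val U Z S = (\<Sum>u\<in>U. Z u (alloc_of S u))"

definition mono_submod :: "nat set \<Rightarrow> (nat set \<Rightarrow> real) \<Rightarrow> bool" where
  "mono_submod R f \<longleftrightarrow> f {} = 0
     \<and> (\<forall>S T. S \<subseteq> T \<and> T \<subseteq> R \<longrightarrow> f S \<le> f T)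
     \<and> (\<forall>S T r. S \<subseteq> T \<and> T \<subseteq> R \<and> r \<in> R \<and> r \<notin> T \<longrightarrow>
            f (insert r T) - f T \<le> f (insert r S) - f S)"

definition curvature :: "nat set \<Rightarrow> (nat set \<Rightarrow> real) \<Rightarrow> real" where
  "curvature R f = 1 - Min {(f (insert r S) - f S) / f {r} | S r.
       S \<subseteq> R \<and> r \<in> R \<and> r \<notin> S \<and> f {r} > 0}"

definition is_partition :: "nat set \<Rightarrow> nat set \<Rightarrow> (nat \<times> nat) set \<Rightarrow> bool" where
  "is_partition U R S \<longleftrightarrow> S \<subseteq> U \<times> R \<and> (\<forall>r\<in>R. \<exists>!u. (u, r) \<in> S)"

definition is_optimal :: "nat set \<Rightarrow> nat set \<Rightarrow> (nat \<Rightarrow> nat set \<Rightarrow> real) \<Rightarrow> (nat \<times> nat) set \<Rightarrow> bool" where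
  "is_optimal U R Z \<Omega> \<longleftrightarrow> is_partition U R \<Omega>
     \<and> (\<forall>S. is_partition U R S \<longrightarrow> total_val U Z S \<le> total_val U Z \<Omega>)"

definition marg :: "(nat \<Rightarrow> nat set \<Rightarrow> real) \<Rightarrow> (nat \<times> nat) set \<Rightarrow> nat \<Rightarrow> nat \<Rightarrow> real" where
  "marg Z S u r = Z u (insert r (alloc_of S u)) - Z u (alloc_of S u)"

text \<open>d_i(u,r) = rho^u_r / max over u' \<noteq> u of rho^{u'}_r.  With Isabelle's x/0 = 0, a zero
  denominator gives 1/d = 0, matching the convention 1/\<infinity> = 0.\<close>
definition dratio :: "nat set \<Rightarrow> (nat \<Rightarrow> nat set \<Rightarrow> real) \<Rightarrow> (nat \<times> nat) set \<Rightarrow> nat \<Rightarrow> nat \<Rightarrow> real" where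
  "dratio U Z S u r = marg Z S u r / Max ((\<lambda>u'. marg Z S u' r) ` (U - {u}))"

definition tie_key :: "nat set \<Rightarrow> nat set \<Rightarrow> (nat \<Rightarrow> nat set \<Rightarrow> real) \<Rightarrow> (nat \<times> nat) set \<Rightarrow> nat \<Rightarrow> nat \<Rightarrow> real" where
  "tie_key U R Z S u r = curvature R (Z u) + 1 / dratio U Z S u r"

definition allocated :: "(nat \<times> nat) set \<Rightarrow> nat set" where
  "allocated S = snd ` S"

definition prefix :: "(nat \<Rightarrow> nat) \<Rightarrow> (nat \<Rightarrow> nat) \<Rightarrow> nat \<Rightarrow> (nat \<times> nat) set" where
  "prefix us rs i = {(us j, rs j) | j. 1 \<le> j \<and> j \<le> i}"

text \<open>(us i, rs i), i = 1..n, is the run of GREEDY-M: at each step the chosen pair is the unique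
  best unallocated pair w.r.t. (max marginal gain, then min tie_key, then the fixed index,
  which is the lexicographic order on (user, resource)).\<close>
definition greedy_m_run :: "nat set \<Rightarrow> nat set \<Rightarrow> (nat \<Rightarrow> nat set \<Rightarrow> real) \<Rightarrow> (nat \<Rightarrow> nat) \<Rightarrow> (nat \<Rightarrow> nat) \<Rightarrow> bool" where
  "greedy_m_run U R Z us rs \<longleftrightarrow>
    (\<forall>i\<in>{1..card R}.
       let Gp = prefix us rs (i - 1) in
       us i \<in> U \<and> rs i \<in> R \<and> rs i \<notin> allocated Gp \<and>
       (\<forall>u\<in>U. \<forall>r\<in>R - allocated Gp. (u, r) \<noteq> (us i, rs i) \<longrightarrow>
          marg Z Gp u r < marg Z Gp (us i) (rs i)
          \<or> (marg Z Gp u r = marg Z Gp (us i) (rs i)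
             \<and> tie_key U R Z Gp (us i) (rs i) < tie_key U R Z Gp u r)
          \<or> (marg Z Gp u r = marg Z Gp (us i) (rs i)
             \<and> tie_key U R Z Gp (us i) (rs i) = tie_key U R Z Gp u r
             \<and> (us i < u \<or> (us i = u \<and> rs i < r)))))"

end

theory Submission
  imports Defs
begin

text \<open>
  Resource \<open>k\<close> is worth \<open>s^k\<close> to the user of parity \<open>k mod 2\<close> and \<open>t s^(k-1)\<close> to the
  other user, who however gets only \<open>(1 - c) t s^(k-1)\<close> for it when already holding \<open>k - 1\<close>;
  user \<open>1\<close> also values resource \<open>0\<close> at \<open>1/d\<close>. If \<open>d (1-c) t < s\<close>, GREEDY-M takes the
  resources in the order \<open>0, 1, 2, \<dots>\<close>, each for the user of its parity, with tie-breaking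
  keys \<open>c + 1/d\<close> at the first step and \<open>c + (1-c) t / s \<le> c + 1/d\<close> afterwards, and collects
  \<open>\<Sum>k<n. s^k\<close>; giving every resource to the other user yields \<open>1/d + t \<Sum>k<n-1. s^k\<close>.
  As \<open>s \<to> d (1-c)\<close>, \<open>t \<to> 1\<close> and \<open>n \<to> \<infinity>\<close> the ratio tends to
  \<open>1 / ((1 - d (1-c))/d + 1) = 1 / (c + 1/d)\<close>.
\<close>

lemma optimal_partition_exists:
  assumes "finite U" "finite R" "is_partition U R P"
  shows "\<exists>\<Omega>. is_optimal U R Z \<Omega> \<and> total_val U Z P \<le> total_val U Z \<Omega>"
proof -
  let ?Ps = "{S. is_partition U R S}"
  have "finite ?Ps"
    by (rule finite_subset[of _ "Pow (U \<times> R)"]) (auto simp: is_partition_def assms)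
  moreover have "P \<in> ?Ps" using assms(3) by simp
  ultimately have "Max (total_val U Z ` ?Ps) \<in> total_val U Z ` ?Ps"
    by (intro Max_in) auto
  then obtain \<Omega> where "\<Omega> \<in> ?Ps" "total_val U Z \<Omega> = Max (total_val U Z ` ?Ps)"
    by auto
  with \<open>finite ?Ps\<close> \<open>P \<in> ?Ps\<close> show ?thesis
    unfolding is_optimal_def by auto
qed

lemma geometric_sum_ratio_le:
  fixes s t e a :: real
  assumes "0 \<le> s" "s < 1" "0 < a" "a \<le> (1 - s) * e + t * (1 - s ^ (n - 1))"
  shows "(\<Sum>k<n. s ^ k) / (e + t * (\<Sum>k<n - 1. s ^ k)) \<le> 1 / a"
proof -
  define D where "D = e + t * (\<Sum>k<n - 1. s ^ k)"
  have "(1 - s) * D = (1 - s) * e + t * (1 - s ^ (n - 1))"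
    unfolding D_def one_diff_power_eq[of s "n - 1"] by (simp add: algebra_simps)
  with assms have aD: "a \<le> (1 - s) * D" by simp
  with assms have "0 < D" by (smt (verit) mult_nonneg_nonpos)
  have "(1 - s) * (\<Sum>k<n. s ^ k) \<le> 1"
    using one_diff_power_eq[of s n] zero_le_power[OF assms(1), of n] by linarith
  also have "\<dots> \<le> (1 - s) * (D / a)" using aD assms(3) by (simp add: le_divide_eq)
  finally have "(\<Sum>k<n. s ^ k) \<le> D / a"
    using assms(2) mult_le_cancel_left_pos[of "1 - s"] by (metis diff_gt_0_iff_gt)
  with \<open>0 < D\<close> assms(3) show ?thesis
    unfolding D_def by (simp add: divide_le_eq field_simps)
qed

lemma chain_parameters_exist:
  fixes c d \<epsilon> :: real
  assumes "0 < c" "c \<le> 1" "1 \<le> d" "c = 1 \<or> d < 1 / (1 - c)" "0 < \<epsilon>"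
  shows "\<exists>s t n. 0 < s \<and> s < 1 \<and> 0 < t \<and> t < 1 \<and> d * ((1 - c) * t) < s \<and> 3 \<le> n
           \<and> c + 1 / d - \<epsilon> \<le> (1 - s) / d + t * (1 - s ^ (n - 1))"
proof -
  define q where "q = d * (1 - c)"
  have "0 \<le> q" using assms by (simp add: q_def)
  have "q < 1"
    using assms by (cases "c = 1") (auto simp: q_def field_simps)
  define \<eta> where "\<eta> = min (\<epsilon> / (2 * (1 + 1 / d))) ((1 - q) / 2)"
  have "0 < \<eta>" using assms \<open>q < 1\<close> by (simp add: \<eta>_def add_pos_pos)
  have "\<eta> * (1 + 1 / d) \<le> \<epsilon> / 2"
    using min.cobounded1[of "\<epsilon> / (2 * (1 + 1 / d))" "(1 - q) / 2"] assms
    by (simp add: \<eta>_def le_divide_eq add_pos_pos algebra_simps)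
  define s where "s = q + \<eta>"
  define t where "t = 1 - \<eta>"
  have "\<eta> \<le> (1 - q) / 2" unfolding \<eta>_def by (rule min.cobounded2)
  have s: "0 < s" "s < 1" and t: "0 < t" "t < 1"
    using \<open>0 \<le> q\<close> \<open>q < 1\<close> \<open>0 < \<eta>\<close> \<open>\<eta> \<le> (1 - q) / 2\<close> by (auto simp: s_def t_def)
  have "d * ((1 - c) * t) < s"
    using \<open>0 \<le> q\<close> \<open>0 < \<eta>\<close> t mult_left_le[of t q] by (simp add: q_def s_def mult.assoc)
  obtain N where "s ^ N < \<epsilon> / 2" using real_arch_pow_inv[of "\<epsilon> / 2" s] assms s by auto
  have "s ^ (N + 2) \<le> s ^ N" using s by (intro power_decreasing) auto
  moreover have "t * s ^ (N + 2) \<le> s ^ (N + 2)" using s t by (intro mult_left_le_one_le) auto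
  moreover have "(1 - s) / d + t = c + 1 / d - \<eta> * (1 + 1 / d)"
    using assms by (simp add: s_def t_def q_def field_simps)
  moreover have "t * (1 - s ^ (N + 3 - 1)) = t - t * s ^ (N + 2)" by (simp add: algebra_simps)
  ultimately have "c + 1 / d - \<epsilon> \<le> (1 - s) / d + t * (1 - s ^ (N + 3 - 1))"
    using \<open>s ^ N < \<epsilon> / 2\<close> \<open>\<eta> * (1 + 1 / d) \<le> \<epsilon> / 2\<close> by linarith
  with s t \<open>d * ((1 - c) * t) < s\<close> show ?thesis
    by (intro exI[of _ s] exI[of _ t] exI[of _ "N + 3"]) auto
qed

definition pair_value :: "real \<Rightarrow> bool \<Rightarrow> bool \<Rightarrow> real \<Rightarrow> real \<Rightarrow> real" where
  "pair_value c x y A B = (if x \<and> y then A + (1 - c) * B else if x then A else if y then B else 0)"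

definition chain_val :: "real \<Rightarrow> real \<Rightarrow> real \<Rightarrow> real \<Rightarrow> nat \<Rightarrow> nat \<Rightarrow> nat set \<Rightarrow> real" where
  "chain_val c d s t n u S = (if u = 1 \<and> 0 \<in> S then 1 / d else 0)
     + (\<Sum>k | k < n \<and> k mod 2 = u. pair_value c (k \<in> S) (Suc k \<in> S) (s ^ k) (t * s ^ k))"

lemma pair_value_mono:
  assumes "x \<longrightarrow> x'" "y \<longrightarrow> y'" "0 \<le> B" "B \<le> A" "0 \<le> c" "c \<le> 1"
  shows "pair_value c x y A B \<le> pair_value c x' y' A B"
proof -
  have "c * B \<le> B" using assms by (intro mult_left_le_one_le)
  with assms show ?thesis unfolding pair_value_def by (auto simp: algebra_simps)
qed

lemma sum_delta_Suc:
  fixes g :: "nat \<Rightarrow> 'a::comm_monoid_add"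
  assumes "finite I"
  shows "(\<Sum>k\<in>I. if Suc k = r then g k else 0) = (if 0 < r \<and> r - 1 \<in> I then g (r - 1) else 0)"
proof -
  have "(\<Sum>k\<in>I. if Suc k = r then g k else 0)
      = (\<Sum>k\<in>I. if k = r - 1 then (if 0 < r then g k else 0) else 0)"
    by (rule sum.cong) auto
  with assms show ?thesis by (auto simp: sum.delta)
qed

lemma chain_val_insert:
  assumes "r \<notin> S"
  shows "chain_val c d s t n u (insert r S) - chain_val c d s t n u S =
      (if u = 1 \<and> r = 0 then 1 / d else 0)
    + (if r < n \<and> r mod 2 = u then (if Suc r \<in> S then s ^ r - c * (t * s ^ r) else s ^ r) else 0)
    + (if 0 < r \<and> r - 1 < n \<and> (r - 1) mod 2 = u
       then (if r - 1 \<in> S then (1 - c) * (t * s ^ (r - 1)) else t * s ^ (r - 1)) else 0)"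
proof -
  let ?I = "{k. k < n \<and> k mod 2 = u}"
  let ?P = "\<lambda>S k. pair_value c (k \<in> S) (Suc k \<in> S) (s ^ k) (t * s ^ k)"
  define X where "X = (if Suc r \<in> S then s ^ r - c * (t * s ^ r) else s ^ r)"
  define Y where "Y = (\<lambda>k. if k \<in> S then (1 - c) * (t * s ^ k) else t * s ^ k)"
  have "sum (?P (insert r S)) ?I - sum (?P S) ?I
      = (\<Sum>k\<in>?I. (if k = r then X else 0) + (if Suc k = r then Y k else 0))"
    unfolding sum_subtractf[symmetric]
    by (rule sum.cong) (use assms in \<open>auto simp: pair_value_def X_def Y_def algebra_simps\<close>)
  also have "\<dots> = (if r \<in> ?I then X else 0) + (if 0 < r \<and> r - 1 \<in> ?I then Y (r - 1) else 0)"
    by (simp add: sum.distrib sum.delta sum_delta_Suc)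
  finally show ?thesis
    unfolding chain_val_def using assms by (auto simp: X_def Y_def)
qed

definition greedy_user :: "nat \<Rightarrow> nat" where
  "greedy_user j = (j - 1) mod 2"

definition greedy_res :: "nat \<Rightarrow> nat" where
  "greedy_res j = j - 1"

abbreviation greedy_prefix :: "nat \<Rightarrow> (nat \<times> nat) set" where
  "greedy_prefix \<equiv> prefix greedy_user greedy_res"

lemma alloc_of_greedy_prefix: "alloc_of (greedy_prefix m) u = {k. k < m \<and> k mod 2 = u}"
  unfolding alloc_of_def prefix_def greedy_user_def greedy_res_def
  by (auto intro!: exI[of _ "Suc k" for k])

lemma allocated_greedy_prefix: "allocated (greedy_prefix m) = {..<m}"
  unfolding allocated_def prefix_def greedy_user_def greedy_res_def
  by (force intro: rev_image_eqI[of "(k mod 2, k)" for k] exI[of _ "Suc k" for k])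

lemma total_val_two_users: "total_val {0, 1} Z S = Z 0 (alloc_of S 0) + Z 1 (alloc_of S 1)"
  unfolding total_val_def by simp

lemma sum_split_parity:
  fixes f :: "nat \<Rightarrow> real"
  shows "(\<Sum>k | k < n \<and> k mod 2 = 0. f k) + (\<Sum>k | k < n \<and> k mod 2 = 1. f k) = (\<Sum>k<n. f k)"
proof -
  have "{..<n} = {k. k < n \<and> k mod 2 = 0} \<union> {k. k < n \<and> k mod 2 = 1}" by auto
  then show ?thesis by (simp add: sum.union_disjoint[symmetric] disjoint_iff)
qed

lemma mod_2_pred_neq: "0 < m \<Longrightarrow> (m - 1) mod 2 \<noteq> (m::nat) mod 2"
  by (cases m) (auto simp: mod_Suc)

definition opposite_partition :: "nat \<Rightarrow> (nat \<times> nat) set" where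
  "opposite_partition n = {(u, k). k < n \<and> u = 1 - k mod 2}"

lemma is_partition_opposite: "is_partition {0, 1} {..<n} (opposite_partition n)"
  unfolding is_partition_def opposite_partition_def by auto

locale greedy_chain =
  fixes c d s t :: real and n :: nat
  assumes c_nonneg: "0 \<le> c" and c_le_1: "c \<le> 1" and d_ge_1: "1 \<le> d"
    and s_pos: "0 < s" and s_less_1: "s < 1" and t_pos: "0 < t" and t_less_1: "t < 1"
    and scaled_discount_less: "d * ((1 - c) * t) < s" and n_ge_3: "3 \<le> n"
begin

abbreviation Z :: "nat \<Rightarrow> nat set \<Rightarrow> real" where
  "Z \<equiv> chain_val c d s t n"

lemma discount_less: "(1 - c) * t < s"
proof -
  have "0 \<le> (1 - c) * t" using c_le_1 t_pos by simp
  then have "(1 - c) * t \<le> d * ((1 - c) * t)" using mult_right_mono[OF d_ge_1] by simp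
  with scaled_discount_less show ?thesis by simp
qed

lemma Z_empty: "Z u {} = 0"
  by (simp add: chain_val_def pair_value_def)

lemma Z_singleton:
  assumes "r < n"
  shows "Z u {r} = (if u = 1 \<and> r = 0 then 1 / d else 0) + (if r mod 2 = u then s ^ r else 0)
    + (if 0 < r \<and> (r - 1) mod 2 = u then t * s ^ (r - 1) else 0)"
  using chain_val_insert[of r "{}" c d s t n u] assms by (auto simp: Z_empty)

lemma Z_insert_ge:
  assumes "r \<notin> S" "r < n"
  shows "(1 - c) * Z u {r} \<le> Z u (insert r S) - Z u S"
proof -
  have shrink: "(1 - c) * x \<le> x" if "0 \<le> x" for x
    using that c_nonneg by (simp add: algebra_simps)
  have "c * (t * s ^ r) \<le> c * s ^ r"
    using c_nonneg t_less_1 s_pos by (intro mult_left_mono) auto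
  then have "(1 - c) * s ^ r \<le> s ^ r - c * (t * s ^ r)" by (simp add: algebra_simps)
  moreover have "(1 - c) * s ^ r \<le> s ^ r" "(1 - c) * (t * s ^ (r - 1)) \<le> t * s ^ (r - 1)"
    "(1 - c) * (1 / d) \<le> 1 / d"
    using shrink[of "s ^ r"] shrink[of "t * s ^ (r - 1)"] shrink[of "1 / d"] s_pos t_pos d_ge_1
    by simp_all
  ultimately show ?thesis
    unfolding chain_val_insert[OF assms(1)] Z_singleton[OF assms(2)] distrib_left
    using assms by (intro add_mono) auto
qed

lemma mono_submod_Z: "mono_submod {..<n} (Z u)"
  unfolding mono_submod_def
proof (intro conjI allI impI)
  show "Z u {} = 0" by (rule Z_empty)
next
  fix S T assume "S \<subseteq> T \<and> T \<subseteq> {..<n}"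
  then have "pair_value c (k \<in> S) (Suc k \<in> S) (s ^ k) (t * s ^ k)
           \<le> pair_value c (k \<in> T) (Suc k \<in> T) (s ^ k) (t * s ^ k)" for k
    using s_pos t_pos t_less_1 c_nonneg c_le_1 by (intro pair_value_mono) auto
  with \<open>S \<subseteq> T \<and> T \<subseteq> {..<n}\<close> d_ge_1 show "Z u S \<le> Z u T"
    unfolding chain_val_def by (intro add_mono sum_mono) auto
next
  fix S T r assume "S \<subseteq> T \<and> T \<subseteq> {..<n} \<and> r \<in> {..<n} \<and> r \<notin> T"
  then have "r \<notin> S" "r \<notin> T" "S \<subseteq> T" by auto
  have "0 \<le> c * (t * s ^ r)" using c_nonneg t_pos s_pos by simp
  moreover have "(1 - c) * (t * s ^ (r - 1)) \<le> t * s ^ (r - 1)"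
    using c_nonneg t_pos s_pos by (simp add: algebra_simps)
  ultimately show "Z u (insert r T) - Z u T \<le> Z u (insert r S) - Z u S"
    unfolding chain_val_insert[OF \<open>r \<notin> S\<close>] chain_val_insert[OF \<open>r \<notin> T\<close>]
    using \<open>S \<subseteq> T\<close> by (intro add_mono) auto
qed

lemma curvature_Z:
  assumes "u \<in> {0, 1}"
  shows "curvature {..<n} (Z u) = c"
proof -
  define C where "C = {(Z u (insert r S) - Z u S) / Z u {r} | S r.
       S \<subseteq> {..<n} \<and> r \<in> {..<n} \<and> r \<notin> S \<and> Z u {r} > 0}"
  have "C \<subseteq> (\<lambda>(S, r). (Z u (insert r S) - Z u S) / Z u {r}) ` (Pow {..<n} \<times> {..<n})"
    unfolding C_def by auto
  then have "finite C" by (rule finite_subset) auto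
  have "1 - c \<le> y" if "y \<in> C" for y
    using that Z_insert_ge unfolding C_def by (auto simp: pos_le_divide_eq)
  moreover have "1 - c \<in> C"
    \<comment> \<open>attained by adding \<open>u + 1\<close> to \<open>{u}\<close>; this is why \<open>n \<ge> 3\<close> is needed\<close>
  proof -
    have "Z u {Suc u} = t * s ^ u" "Z u (insert (Suc u) {u}) - Z u {u} = (1 - c) * (t * s ^ u)"
      using Z_singleton[of "Suc u" u] chain_val_insert[of "Suc u" "{u}" c d s t n u] assms n_ge_3
      by auto
    moreover have "0 < t * s ^ u" using t_pos s_pos by simp
    ultimately show ?thesis
      unfolding C_def using assms n_ge_3
      by (intro CollectI exI[of _ "{u}"] exI[of _ "Suc u"]) auto
  qed
  ultimately have "Min C = 1 - c" using \<open>finite C\<close> by (intro Min_eqI) auto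
  then show ?thesis unfolding curvature_def C_def by simp
qed

lemma marg_greedy_prefix:
  assumes "m \<le> r" "r < n"
  shows "marg Z (greedy_prefix m) u r = (if u = 1 \<and> r = 0 then 1 / d else 0)
    + (if r mod 2 = u then s ^ r else 0)
    + (if 0 < r \<and> (r - 1) mod 2 = u
       then (if r = m then (1 - c) * (t * s ^ (r - 1)) else t * s ^ (r - 1)) else 0)"
proof -
  have "r \<notin> {k. k < m \<and> k mod 2 = u}" using assms by auto
  from chain_val_insert[OF this] show ?thesis
    unfolding marg_def alloc_of_greedy_prefix using assms by auto
qed

lemma marg_greedy_own: "m < n \<Longrightarrow> marg Z (greedy_prefix m) (m mod 2) m = s ^ m"
  using marg_greedy_prefix[of m m "m mod 2"] mod_2_pred_neq[of m] by auto

lemma marg_greedy_other: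
  "m < n \<Longrightarrow> marg Z (greedy_prefix m) (1 - m mod 2) m
     = (if m = 0 then 1 / d else (1 - c) * (t * s ^ (m - 1)))"
  using marg_greedy_prefix[of m m "1 - m mod 2"] mod_2_pred_neq[of m] by (auto simp: mod_Suc)

lemma marg_greedy_later:
  assumes "m < r" "r < n" "u \<in> {0, 1}"
  shows "marg Z (greedy_prefix m) u r < s ^ m"
proof -
  have "s ^ r < s ^ m" using assms s_pos s_less_1 by (intro power_strict_decreasing) auto
  moreover have "t * s ^ (r - 1) < s ^ m"
  proof -
    have "t * s ^ (r - 1) < s ^ (r - 1)" using t_less_1 s_pos by simp
    also have "\<dots> \<le> s ^ m" using assms s_pos s_less_1 by (intro power_decreasing) auto
    finally show ?thesis .
  qed
  moreover have "r mod 2 = u \<or> (r - 1) mod 2 = u" using assms mod_2_pred_neq[of r] by auto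
  ultimately show ?thesis
    using marg_greedy_prefix[of m r u] assms mod_2_pred_neq[of r] by auto
qed

lemma tie_key_two_users:
  assumes "u \<in> {0, 1}"
  shows "tie_key {0, 1} {..<n} Z S u r = c + marg Z S (1 - u) r / marg Z S u r"
proof -
  have "{0, 1} - {u} = {1 - u}" using assms by auto
  then show ?thesis unfolding tie_key_def dratio_def using curvature_Z[OF assms] by simp
qed

lemma tie_key_greedy:
  assumes "m < n"
  shows "tie_key {0, 1} {..<n} Z (greedy_prefix m) (m mod 2) m
       = c + (if m = 0 then 1 / d else (1 - c) * t / s)"
proof -
  have "(1 - c) * (t * s ^ (m - 1)) / s ^ m = (1 - c) * t / s" if "0 < m"
    using that s_pos by (cases m) (auto simp: field_simps)
  moreover have "m mod 2 \<in> {0, 1}" by auto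
  ultimately show ?thesis
    unfolding tie_key_two_users[OF \<open>m mod 2 \<in> {0, 1}\<close>]
    using marg_greedy_own[OF assms] marg_greedy_other[OF assms] by auto
qed

text \<open>The only tie occurs at the first step when \<open>d = 1\<close>: resource \<open>0\<close> is worth \<open>1\<close> to both
  users, the tie keys agree too, and the user index decides for user \<open>0\<close>.\<close>

lemma greedy_choice:
  assumes "m < n" "u \<in> {0, 1}" "m \<le> r" "r < n" "(u, r) \<noteq> (m mod 2, m)"
  defines "G \<equiv> greedy_prefix m"
  shows "marg Z G u r < marg Z G (m mod 2) m
    \<or> (marg Z G u r = marg Z G (m mod 2) m
       \<and> tie_key {0, 1} {..<n} Z G (m mod 2) m = tie_key {0, 1} {..<n} Z G u r \<and> m mod 2 < u)"
proof (cases "r = m")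
  case False
  then show ?thesis
    using marg_greedy_later[of m r u] marg_greedy_own assms by (simp add: G_def)
next
  case True
  with assms have u: "u = 1 - m mod 2" by auto
  show ?thesis
  proof (cases "m = 0")
    case True
    have "marg Z G u r = 1 / d" "marg Z G (m mod 2) m = 1"
      using marg_greedy_other[OF assms(1)] marg_greedy_own[OF assms(1)] u \<open>r = m\<close> True
      by (simp_all add: G_def)
    moreover have "1 / d < 1 \<or> d = 1" using d_ge_1 by auto
    ultimately show ?thesis
      using tie_key_two_users[of 0 G 0] tie_key_two_users[of 1 G 0] u \<open>r = m\<close> True by auto
  next
    case False
    have "(1 - c) * t * s ^ (m - 1) < s * s ^ (m - 1)"
      using discount_less s_pos by (intro mult_strict_right_mono) auto
    also have "\<dots> = s ^ m" using False by (cases m) auto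
    finally show ?thesis
      using marg_greedy_other[OF assms(1)] marg_greedy_own[OF assms(1)] u \<open>r = m\<close> False
      by (simp add: G_def mult.assoc)
  qed
qed

lemma greedy_m_run_Z: "greedy_m_run {0, 1} {..<n} Z greedy_user greedy_res"
  unfolding greedy_m_run_def Let_def
proof (intro ballI, goal_cases)
  case (1 i)
  then obtain m where i: "i = Suc m" and "m < n" by (cases i) auto
  have "greedy_user (Suc m) = m mod 2" "greedy_res (Suc m) = m"
    by (simp_all add: greedy_user_def greedy_res_def)
  then show ?case
    unfolding i diff_Suc_1 allocated_greedy_prefix
  proof (intro conjI ballI impI, goal_cases)
    case (4 u r)
    then show ?case using greedy_choice[OF \<open>m < n\<close>, of u r] by auto
  qed (use \<open>m < n\<close> in auto)
qed

lemma max_tie_key_greedy: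
  "Max ((\<lambda>i. tie_key {0, 1} {..<n} Z (greedy_prefix (i - 1)) (greedy_user i) (greedy_res i))
          ` {1..card {..<n}}) = c + 1 / d"
proof (rule Max_eqI)
  fix y assume "y \<in> (\<lambda>i. tie_key {0, 1} {..<n} Z (greedy_prefix (i - 1)) (greedy_user i) (greedy_res i))
                   ` {1..card {..<n}}"
  then obtain i where "1 \<le> i" "i \<le> n"
    "y = tie_key {0, 1} {..<n} Z (greedy_prefix (i - 1)) ((i - 1) mod 2) (i - 1)"
    by (auto simp: greedy_user_def greedy_res_def)
  moreover have "(1 - c) * t / s \<le> 1 / d"
    using scaled_discount_less s_pos d_ge_1 by (simp add: field_simps)
  ultimately show "y \<le> c + 1 / d" using tie_key_greedy[of "i - 1"] by simp
next
  have "tie_key {0, 1} {..<n} Z (greedy_prefix 0) 0 0 = c + 1 / d"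
    using tie_key_greedy[of 0] n_ge_3 by simp
  then show "c + 1 / d \<in> (\<lambda>i. tie_key {0, 1} {..<n} Z (greedy_prefix (i - 1)) (greedy_user i) (greedy_res i))
                   ` {1..card {..<n}}"
    using n_ge_3 by (force simp: greedy_user_def greedy_res_def intro: rev_image_eqI[of 1])
qed simp

lemma total_val_greedy: "total_val {0, 1} Z (greedy_prefix n) = (\<Sum>k<n. s ^ k)"
proof -
  have "Z u {k. k < n \<and> k mod 2 = u} = (\<Sum>k | k < n \<and> k mod 2 = u. s ^ k)" if "u \<in> {0, 1}" for u
    using that unfolding chain_val_def by (auto simp: pair_value_def mod_Suc intro!: sum.cong)
  then show ?thesis
    unfolding total_val_two_users alloc_of_greedy_prefix
    using sum_split_parity[where f = "\<lambda>k. s ^ k"] by simp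
qed

lemma total_val_opposite: "total_val {0, 1} Z (opposite_partition n) = 1 / d + t * (\<Sum>k<n - 1. s ^ k)"
proof -
  let ?f = "\<lambda>k. if Suc k < n then t * s ^ k else 0"
  have Z_opposite: "Z u (alloc_of (opposite_partition n) u)
      = (if u = 1 then 1 / d else 0) + (\<Sum>k | k < n \<and> k mod 2 = u. ?f k)" if "u \<in> {0, 1}" for u
    using that n_ge_3
    unfolding chain_val_def alloc_of_def opposite_partition_def
    by (auto simp: pair_value_def mod_Suc intro!: sum.cong)
  obtain n' where "n = Suc n'" using n_ge_3 by (cases n) auto
  then have "(\<Sum>k<n. ?f k) = t * (\<Sum>k<n - 1. s ^ k)"
    by (simp add: sum_distrib_left)
  then show ?thesis
    unfolding total_val_two_users using Z_opposite[of 0] Z_opposite[of 1] sum_split_parity[where f = ?f]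
    by simp
qed

lemma lower_bound_instance:
  assumes "0 < a" "a \<le> (1 - s) / d + t * (1 - s ^ (n - 1))"
  shows "\<exists>(U::nat set) (R::nat set) (Z::nat \<Rightarrow> nat set \<Rightarrow> real) (us::nat \<Rightarrow> nat) (rs::nat \<Rightarrow> nat)
            (\<Omega>::(nat \<times> nat) set).
           finite R \<and> card U = 2
         \<and> (\<forall>u\<in>U. mono_submod R (Z u) \<and> (\<exists>r\<in>R. Z u {r} > 0) \<and> curvature R (Z u) = c)
         \<and> greedy_m_run U R Z us rs
         \<and> Max ((\<lambda>i. tie_key U R Z (prefix us rs (i - 1)) (us i) (rs i)) ` {1..card R}) = c + 1 / d
         \<and> is_optimal U R Z \<Omega>
         \<and> total_val U Z (prefix us rs (card R)) / total_val U Z \<Omega> \<le> 1 / a"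
proof -
  obtain \<Omega> where "is_optimal {0, 1} {..<n} Z \<Omega>"
    and opt: "total_val {0, 1} Z (opposite_partition n) \<le> total_val {0, 1} Z \<Omega>"
    using optimal_partition_exists[OF _ _ is_partition_opposite] by blast
  have "\<exists>r\<in>{..<n}. 0 < Z u {r}" if "u \<in> {0, 1}" for u
    using that Z_singleton[of 0 u] n_ge_3 d_ge_1 by (intro bexI[of _ 0]) auto
  have "0 < total_val {0, 1} Z (opposite_partition n)"
    unfolding total_val_opposite using d_ge_1 t_pos s_pos
    by (intro add_pos_nonneg mult_nonneg_nonneg sum_nonneg) auto
  with opt have "total_val {0, 1} Z (greedy_prefix n) / total_val {0, 1} Z \<Omega>
      \<le> total_val {0, 1} Z (greedy_prefix n) / total_val {0, 1} Z (opposite_partition n)"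
    unfolding total_val_greedy using s_pos by (intro divide_left_mono sum_nonneg) auto
  also have "\<dots> \<le> 1 / a"
    unfolding total_val_greedy total_val_opposite using assms s_pos s_less_1
    by (intro geometric_sum_ratio_le) auto
  finally show ?thesis
    using mono_submod_Z curvature_Z greedy_m_run_Z max_tie_key_greedy \<open>is_optimal {0, 1} {..<n} Z \<Omega>\<close>
      \<open>\<And>u. u \<in> {0, 1} \<Longrightarrow> \<exists>r\<in>{..<n}. 0 < Z u {r}\<close>
    by (intro exI[of _ "{0, 1}"] exI[of _ "{..<n}"] exI[of _ Z] exI[of _ greedy_user]
        exI[of _ greedy_res] exI[of _ \<Omega>]) auto
qed

end

theorem lemma2:
  fixes c d \<delta> :: real
  assumes "0 < c" and "c \<le> 1" and "1 \<le> d" and "c = 1 \<or> d < 1 / (1 - c)" and "0 < \<delta>"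
  shows "\<exists>(U::nat set) (R::nat set) (Z::nat \<Rightarrow> nat set \<Rightarrow> real) (us::nat \<Rightarrow> nat) (rs::nat \<Rightarrow> nat)
            (\<Omega>::(nat \<times> nat) set).
           finite R \<and> card U = 2
         \<and> (\<forall>u\<in>U. mono_submod R (Z u) \<and> (\<exists>r\<in>R. Z u {r} > 0) \<and> curvature R (Z u) = c)
         \<and> greedy_m_run U R Z us rs
         \<and> Max ((\<lambda>i. tie_key U R Z (prefix us rs (i - 1)) (us i) (rs i)) ` {1..card R}) = c + 1 / d
         \<and> is_optimal U R Z \<Omega>
         \<and> total_val U Z (prefix us rs (card R)) / total_val U Z \<Omega> \<le> 1 / (c + 1 / d) + \<delta>"
proof -
  define L where "L = c + 1 / d"
  have "0 < L" using assms by (simp add: L_def add_pos_pos)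
  define a where "a = 1 / (1 / L + \<delta>)"
  have "0 < a" "a < L"
    using \<open>0 < L\<close> assms(5) by (auto simp: a_def divide_less_eq field_simps add_pos_pos)
  then obtain s t n where "0 < s" "s < 1" "0 < t" "t < 1" "d * ((1 - c) * t) < s" "3 \<le> n"
    and "a \<le> (1 - s) / d + t * (1 - s ^ (n - 1))"
    using chain_parameters_exist[OF assms(1-4), of "L - a"] unfolding L_def by auto
  then interpret greedy_chain c d s t n
    using assms by unfold_locales auto
  from lower_bound_instance[OF \<open>0 < a\<close> \<open>a \<le> _\<close>] show ?thesis
    using \<open>0 < L\<close> assms(5) by (simp add: a_def L_def)
qed

end
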